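(* Consider a Boolean control network $\mathbf{x}(t+1)=L\ltimes\mathbf{u}(t)\ltimes\mathbf{x}(t)$, $\mathbf{y}(t)=H\mathbf{x}(t)$, with $L\in\mathcal{L}_{N\times NM}$, $H\in\mathcal{L}_{P\times N}$, a periodic reference output trajectory of minimal period $T\ge1$, $\mathbf{y}_r(s+kT)=\delta_P^{i_s}$ ($s\in[1,T]$, $k\in\mathbb{Z}_+$), and an initial state $\mathbf{x}_0\in\mathcal{L}_N$. Let $\mathbf{v}(t)=H^\top\mathbf{y}_r(t)$ for $t\in[1,T+1]$ (so $\mathbf{v}(T+1)=\mathbf{v}(1)$), $L_{tot}=L_1\vee\cdots\vee L_M$, and $\boldsymbol{\alpha}(1)=\mathbf{v}(1)$, $\boldsymbol{\alpha}(t)=\mathbf{v}(t)\odot(L_{tot}\boldsymbol{\alpha}(t-1))$ for $t\in[2,T+1]$. Define $\boldsymbol{\beta}_1(T+1)=\boldsymbol{\alpha}(T+1)$, $\boldsymbol{\beta}_1(t)=\boldsymbol{\alpha}(t)\odot(L_{tot}^\top\boldsymbol{\beta}_1(t+1))$ for $t=T,\dots,1$, and for $k\ge2$: $\boldsymbol{\beta}_k(T+1)=\boldsymbol{\beta}_{k-1}(T+1)\odot\boldsymbol{\beta}_{k-1}(1)$, $\boldsymbol{\beta}_k(t)=\boldsymbol{\beta}_{k-1}(t)\odot(L_{tot}^\top\boldsymbol{\beta}_k(t+1))$ for $t=T,\dots,1$. Let $\mathcal{X}_t^{(k)}=\{\delta_N^j:[\boldsymbol{\beta}_k(t)]_j\neq0\}$,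 and let $k^*$ be the smallest $k\ge1$ such that $\mathcal{X}_{T+1}^{(k)}\subseteq\mathcal{X}_1^{(k)}$ or $\mathcal{X}_1^{(k)}=\emptyset$. Then the periodic reference output trajectory is trackable from $\mathbf{x}_0$ (i.e. there exists $\{\mathbf{u}(t)\}_{t\in\mathbb{Z}_+}\subset\mathcal{L}_M$ such that the state trajectory with $\mathbf{x}(0)=\mathbf{x}_0$ satisfies $H\mathbf{x}(t)=\mathbf{y}_r(t)$ for all $t\ge1$) if and only if: (i) $\mathcal{X}_1^{(k^* )}\neq\emptyset$ and $\mathcal{X}_{T+1}^{(k^* )}\subseteq\mathcal{X}_1^{(k^* )}$; and (ii) there exists $\mathbf{u}\in\mathcal{L}_M$ such that $L\ltimes\mathbf{u}\ltimes\mathbf{x}_0\in\mathcal{X}_1^{(k^* )}$.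
   Context: $\delta_k^i$ is the $i$-th canonical vector of $\mathbb{R}^k$; $\mathcal{L}_k$ is the set of canonical vectors of $\mathbb{R}^k$; $\mathcal{L}_{k\times q}$ the set of $k\times q$ matrices whose columns lie in $\mathcal{L}_k$. $N=2^n$, $M=2^m$, $P=2^p$. $L=[L_1|\cdots|L_M]$ with $L_i\in\mathcal{L}_{N\times N}$, and $L\ltimes\delta_M^i\ltimes\mathbf{x}=L_i\mathbf{x}$. $\vee$ is entrywise Boolean OR, $\odot$ is the entrywise (Hadamard) product, matrix–vector products are ordinary (only the zero/nonzero pattern of the vectors matters), and $[\mathbf{w}]_j$ is the $j$-th entry of $\mathbf{w}$. *)

theory Defs
  imports Main
begin

(* Encoding conventions:
   - the canonical vector delta_k^j (j = 1..k) is encoded by the index j-1 in {0..<k};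
   - a logical matrix in L_{N x N M} is encoded by L :: nat => nat => nat with
     L_u delta_N^x = delta_N^(L u x) (input index u < M, state index x < N);
   - H in L_{P x N} is encoded by H :: nat => nat, H delta_N^x = delta_P^(H x);
   - vectors in R^N are represented by their zero/nonzero pattern (nat => bool on {0..<N}),
     matrices by their zero/nonzero pattern (nat => nat => bool, row then column). *)

type_synonym bvec = "nat \<Rightarrow> bool"
type_synonym bmat = "nat \<Rightarrow> nat \<Rightarrow> bool"

(* nonzero pattern of the ordinary product A w, A with N columns, nonnegative entries *)
definition bmv :: "bmat \<Rightarrow> nat \<Rightarrow> bvec \<Rightarrow> bvec" where
  "bmv A N w = (\<lambda>a. \<exists>b<N. A a b \<and> w b)"

definition btr :: "bmat \<Rightarrow> bmat" where
  "btr A = (\<lambda>a b. A b a)"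

definition had :: "bvec \<Rightarrow> bvec \<Rightarrow> bvec" where
  "had w1 w2 = (\<lambda>j. w1 j \<and> w2 j)"

definition Lblock :: "(nat \<Rightarrow> nat \<Rightarrow> nat) \<Rightarrow> nat \<Rightarrow> bmat" where
  "Lblock L u = (\<lambda>a b. L u b = a)"

definition Ltot :: "nat \<Rightarrow> (nat \<Rightarrow> nat \<Rightarrow> nat) \<Rightarrow> bmat" where
  "Ltot M L = (\<lambda>a b. \<exists>u<M. Lblock L u a b)"

definition yref :: "nat \<Rightarrow> (nat \<Rightarrow> nat) \<Rightarrow> nat \<Rightarrow> nat" where
  "yref T i t = i ((t - 1) mod T + 1)"

(* v(t) = H^T y_r(t) *)
definition vvec :: "nat \<Rightarrow> (nat \<Rightarrow> nat) \<Rightarrow> (nat \<Rightarrow> nat) \<Rightarrow> nat \<Rightarrow> bvec" where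
  "vvec N H yr t = (\<lambda>j. j < N \<and> H j = yr t)"

(* alpha(1) = v(1), alpha(t) = v(t) \<odot> (L_tot alpha(t-1)); index 0 unused *)
primrec alpha :: "nat \<Rightarrow> bmat \<Rightarrow> (nat \<Rightarrow> bvec) \<Rightarrow> nat \<Rightarrow> bvec" where
  "alpha N Lt v 0 = (\<lambda>_. False)"
| "alpha N Lt v (Suc t) =
     (if t = 0 then v 1 else had (v (Suc t)) (bmv Lt N (alpha N Lt v t)))"

(* backward recursion: value at t = T+1-d *)
primrec bwd :: "nat \<Rightarrow> bmat \<Rightarrow> nat \<Rightarrow> (nat \<Rightarrow> bvec) \<Rightarrow> bvec \<Rightarrow> nat \<Rightarrow> bvec" where
  "bwd N Lt T g bnd 0 = bnd"
| "bwd N Lt T g bnd (Suc d) = had (g (T - d)) (bmv (btr Lt) N (bwd N Lt T g bnd d))"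

definition bw :: "nat \<Rightarrow> bmat \<Rightarrow> nat \<Rightarrow> (nat \<Rightarrow> bvec) \<Rightarrow> bvec \<Rightarrow> nat \<Rightarrow> bvec" where
  "bw N Lt T g bnd t = bwd N Lt T g bnd (Suc T - t)"

(* betaS k = beta_{k+1} *)
primrec betaS :: "nat \<Rightarrow> bmat \<Rightarrow> nat \<Rightarrow> (nat \<Rightarrow> bvec) \<Rightarrow> nat \<Rightarrow> nat \<Rightarrow> bvec" where
  "betaS N Lt T v 0 =
     bw N Lt T (alpha N Lt v) (alpha N Lt v (T + 1))"
| "betaS N Lt T v (Suc k) =
     bw N Lt T (betaS N Lt T v k)
        (had (betaS N Lt T v k (T + 1)) (betaS N Lt T v k 1))"

definition beta :: "nat \<Rightarrow> bmat \<Rightarrow> nat \<Rightarrow> (nat \<Rightarrow> bvec) \<Rightarrow> nat \<Rightarrow> nat \<Rightarrow> bvec" where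
  "beta N Lt T v k = betaS N Lt T v (k - 1)"

definition Xset :: "nat \<Rightarrow> bmat \<Rightarrow> nat \<Rightarrow> (nat \<Rightarrow> bvec) \<Rightarrow> nat \<Rightarrow> nat \<Rightarrow> nat set" where
  "Xset N Lt T v k t = {j. j < N \<and> beta N Lt T v k t j}"

definition kstar :: "nat \<Rightarrow> bmat \<Rightarrow> nat \<Rightarrow> (nat \<Rightarrow> bvec) \<Rightarrow> nat" where
  "kstar N Lt T v = (LEAST k. 1 \<le> k \<and>
      (Xset N Lt T v k (T + 1) \<subseteq> Xset N Lt T v k 1 \<or> Xset N Lt T v k 1 = {}))"

primrec traj :: "(nat \<Rightarrow> nat \<Rightarrow> nat) \<Rightarrow> nat \<Rightarrow> (nat \<Rightarrow> nat) \<Rightarrow> nat \<Rightarrow> nat" where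
  "traj L x0 u 0 = x0"
| "traj L x0 u (Suc t) = L (u t) (traj L x0 u t)"

definition trackable :: "nat \<Rightarrow> (nat \<Rightarrow> nat \<Rightarrow> nat) \<Rightarrow> (nat \<Rightarrow> nat) \<Rightarrow> (nat \<Rightarrow> nat) \<Rightarrow> nat \<Rightarrow> bool" where
  "trackable M L H yr x0 = (\<exists>u. (\<forall>t. u t < M) \<and> (\<forall>t\<ge>1. H (traj L x0 u t) = yr t))"

end

theory Submission
  imports Defs
begin

text \<open>
  Along a trajectory that tracks the reference, the state at time \<open>q T + s\<close>, \<open>1 \<le> s \<le> T + 1\<close>,
  lies in every \<open>\<beta>\<^sub>k(s)\<close>: the constraint \<open>v(s)\<close> propagates forward into \<open>\<alpha>(s)\<close> and then
  backward into each \<open>\<beta>\<^sub>k\<close>, the new boundary factor \<open>\<beta>\<^sub>k(1)\<close> of \<open>\<beta>\<^sub>k\<^sub>+\<^sub>1(T + 1)\<close> being met one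
  period later. So \<open>x(1)\<close> lies in \<open>X\<^sub>1\<close> for every \<open>k\<close>, which at \<open>k\<^sup>*\<close> is then nonempty and, by
  the choice of \<open>k\<^sup>*\<close>, contains \<open>X\<^sub>T\<^sub>+\<^sub>1\<close>. Conversely, by the backward recursion every
  state of \<open>\<beta>\<^sub>k(s)\<close>, \<open>s \<le> T\<close>, has a successor in \<open>\<beta>\<^sub>k(s + 1)\<close>, and \<open>X\<^sub>T\<^sub>+\<^sub>1 \<subseteq> X\<^sub>1\<close>
  closes the cycle; as \<open>\<beta>\<^sub>k(s) \<subseteq> \<alpha>(s) \<subseteq> v(s)\<close>, choosing successors forever yields a
  tracking trajectory.
\<close>

lemma bw_Suc_T [simp]: "bw N Lt T g bnd (Suc T) = bnd"
  by (simp add: bw_def)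

lemma bw_step:
  assumes "t \<le> T"
  shows "bw N Lt T g bnd t = had (g t) (bmv (btr Lt) N (bw N Lt T g bnd (Suc t)))"
proof -
  from assms have "Suc T - t = Suc (T - t)" "T - (T - t) = t" "Suc T - Suc t = T - t"
    by auto
  then show ?thesis by (simp add: bw_def)
qed

lemma bw_imp_factor: "t \<le> T \<Longrightarrow> bw N Lt T g bnd t x \<Longrightarrow> g t x"
  by (simp add: bw_step had_def)

lemma bw_has_successor:
  "t \<le> T \<Longrightarrow> bw N Lt T g bnd t x \<Longrightarrow> \<exists>y<N. Lt y x \<and> bw N Lt T g bnd (Suc t) y"
  by (auto simp: bw_step had_def bmv_def btr_def)

lemma betaS_has_successor:
  "t \<le> T \<Longrightarrow> betaS N Lt T v k t x \<Longrightarrow> \<exists>y<N. Lt y x \<and> betaS N Lt T v k (Suc t) y"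
  by (cases k) (simp_all add: bw_has_successor)

lemma bw_along_path:
  assumes path: "\<forall>t. Lt (xs (Suc t)) (xs t)" "\<forall>t. xs t < N"
    and factor: "\<forall>s\<in>{1..T}. g s (xs (r + s))"
    and bnd: "bnd (xs (r + Suc T))"
    and s: "1 \<le> s" "s \<le> Suc T"
  shows "bw N Lt T g bnd s (xs (r + s))"
  using s(2,1)
proof (induction s rule: inc_induct)
  case base
  then show ?case using bnd by simp
next
  case (step s)
  then have "s \<le> T" by simp
  moreover have "Lt (xs (r + Suc s)) (xs (r + s))" "xs (r + Suc s) < N"
    using path by (metis add_Suc_right)+
  ultimately show ?case
    using step factor by (auto simp: bw_step had_def bmv_def btr_def)
qed

lemma alpha_imp_v: "alpha N Lt v s x \<Longrightarrow> 1 \<le> s \<Longrightarrow> v s x"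
  by (cases s) (auto simp: had_def split: if_splits)

lemma alpha_along_path:
  assumes path: "\<forall>t. Lt (xs (Suc t)) (xs t)" "\<forall>t. xs t < N"
    and v: "\<forall>s\<ge>1. v s (xs (r + s))"
  shows "1 \<le> s \<Longrightarrow> alpha N Lt v s (xs (r + s))"
proof (induction s)
  case 0
  then show ?case by simp
next
  case (Suc s)
  show ?case
  proof (cases "s = 0")
    case True
    then show ?thesis using v[rule_format, of 1] by simp
  next
    case False
    have "Lt (xs (r + Suc s)) (xs (r + s))"
      using path by (metis add_Suc_right)
    then show ?thesis
      using False Suc path v by (auto simp: had_def bmv_def)
  qed
qed

lemma betaS_Suc_imp_betaS:
  assumes "1 \<le> s" "s \<le> Suc T" "betaS N Lt T v (Suc k) s x"
  shows "betaS N Lt T v k s x"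
proof (cases "s = Suc T")
  case True
  then show ?thesis using assms(3) by (simp add: had_def)
next
  case False
  then show ?thesis
    using assms bw_imp_factor[of s T N Lt "betaS N Lt T v k"] by simp
qed

lemma betaS_imp_alpha:
  "1 \<le> s \<Longrightarrow> s \<le> Suc T \<Longrightarrow> betaS N Lt T v k s x \<Longrightarrow> alpha N Lt v s x"
proof (induction k)
  case 0
  then show ?case
    by (cases "s = Suc T") (simp_all add: bw_imp_factor[of s T N Lt "alpha N Lt v"])
next
  case (Suc k)
  then show ?case using betaS_Suc_imp_betaS by blast
qed

lemma betaS_along_periodic_path:
  assumes path: "\<forall>t. Lt (xs (Suc t)) (xs t)" "\<forall>t. xs t < N"
    and v: "\<forall>q. \<forall>s\<ge>1. v s (xs (q * T + s))"
  shows "1 \<le> s \<Longrightarrow> s \<le> Suc T \<Longrightarrow> betaS N Lt T v k s (xs (q * T + s))"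
proof (induction k arbitrary: q s)
  case 0
  have alpha: "alpha N Lt v s (xs (q * T + s))" if "1 \<le> s" for s
    using alpha_along_path[OF path, where r = "q * T"] v that by blast
  show ?case
    unfolding betaS.simps
    by (rule bw_along_path[OF path, where r = "q * T"])
      (use alpha alpha[of "Suc T"] 0 in \<open>simp_all del: alpha.simps\<close>)
next
  case (Suc k)
  have top: "betaS N Lt T v k (Suc T) (xs (q * T + Suc T))"
    using Suc.IH[of "Suc T" q] by simp
  have wrap: "betaS N Lt T v k 1 (xs (q * T + Suc T))"
    using Suc.IH[of 1 "Suc q"] by (simp add: add.commute)
  show ?case
    unfolding betaS.simps
    by (rule bw_along_path[OF path, where r = "q * T"])
      (use Suc top wrap in \<open>simp_all add: had_def del: betaS.simps\<close>)
qed

lemma Xset_Suc_T: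
  "1 \<le> k \<Longrightarrow> Xset N Lt T v (Suc k) (T + 1) = Xset N Lt T v k (T + 1) \<inter> Xset N Lt T v k 1"
  by (cases k) (auto simp: Xset_def beta_def had_def)

lemma kstar_exists:
  "\<exists>k\<ge>1. Xset N Lt T v k (T + 1) \<subseteq> Xset N Lt T v k 1 \<or> Xset N Lt T v k 1 = {}"
proof (rule ccontr)
  assume fails: "\<not> ?thesis"
  let ?Z = "\<lambda>k. Xset N Lt T v k (T + 1)"
  have decrease: "card (?Z (Suc k)) < card (?Z k)" if "1 \<le> k" for k
  proof (rule psubset_card_mono)
    show "finite (?Z k)" by (simp add: Xset_def)
    show "?Z (Suc k) \<subset> ?Z k"
      using fails that Xset_Suc_T[OF that, of N Lt T v] by blast
  qed
  have "card (?Z (Suc k)) + k \<le> card (?Z 1)" for k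
  proof (induction k)
    case (Suc k)
    then show ?case using decrease[of "Suc k"] by simp
  qed simp
  moreover have "card (?Z 1) \<le> N"
    using card_mono[of "{..<N}" "?Z 1"] by (auto simp: Xset_def)
  ultimately show False
    by (metis add_leD2 not_less_eq_eq order.trans)
qed

lemma kstar_spec:
  fixes N T :: nat and Lt :: bmat and v :: "nat \<Rightarrow> bvec"
  defines "k \<equiv> kstar N Lt T v"
  shows "Xset N Lt T v k (T + 1) \<subseteq> Xset N Lt T v k 1 \<or> Xset N Lt T v k 1 = {}"
  using LeastI_ex[OF kstar_exists[unfolded Bex_def]] by (simp add: k_def kstar_def)

lemma exists_traj_invariant:
  assumes start: "S 0 x0" and step: "\<And>t x. S t x \<Longrightarrow> \<exists>u<M. S (Suc t) (L u x)"
  shows "\<exists>u. (\<forall>t. u t < M) \<and> (\<forall>t. S t (traj L x0 u t))"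
proof -
  obtain c where c: "\<And>t x. S t x \<Longrightarrow> c t x < M \<and> S (Suc t) (L (c t x) x)"
    using step by metis
  define xs where "xs = rec_nat x0 (\<lambda>t x. L (c t x) x)"
  have xs_simps: "xs 0 = x0" "xs (Suc t) = L (c t (xs t)) (xs t)" for t
    by (simp_all add: xs_def)
  have S_xs: "S t (xs t)" for t
    by (induction t) (use start c in \<open>simp_all add: xs_simps\<close>)
  define u where "u t = c t (xs t)" for t
  have "traj L x0 u t = xs t" for t
    by (induction t) (simp_all add: xs_simps u_def)
  moreover have "u t < M" for t
    using c[OF S_xs] by (simp add: u_def)
  ultimately have "(\<forall>t. u t < M) \<and> (\<forall>t. S t (traj L x0 u t))"
    using S_xs by simp
  then show ?thesis by blast
qed

definition phase :: "nat \<Rightarrow> nat \<Rightarrow> nat" where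
  "phase T t = (t - 1) mod T + 1"

lemma phase_bounds: "1 \<le> T \<Longrightarrow> 1 \<le> phase T t \<and> phase T t \<le> T"
  by (simp add: phase_def Suc_leI)

lemma phase_Suc:
  "1 \<le> t \<Longrightarrow> phase T (Suc t) = (if phase T t = T then 1 else Suc (phase T t))"
  by (cases t) (auto simp: phase_def mod_Suc)

lemma yref_phase: "1 \<le> T \<Longrightarrow> yref T i (phase T t) = yref T i t"
  by (simp add: yref_def phase_def)

lemma yref_periodic: "1 \<le> t \<Longrightarrow> yref T i (q * T + t) = yref T i t"
proof -
  assume "1 \<le> t"
  then have "q * T + t - 1 = (t - 1) + q * T" by simp
  then show ?thesis by (simp add: yref_def)
qed

lemma exists_traj_periodic:
  assumes "1 \<le> T"
    and step: "\<And>s x. 1 \<le> s \<Longrightarrow> s \<le> T \<Longrightarrow> B s x \<Longrightarrow> \<exists>u<M. B (Suc s) (L u x)"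
    and wrap: "\<And>x. B (Suc T) x \<Longrightarrow> B 1 x"
    and start: "\<exists>u<M. B 1 (L u x0)"
  shows "\<exists>u. (\<forall>t. u t < M) \<and> (\<forall>t\<ge>1. B (phase T t) (traj L x0 u t))"
proof -
  define S where "S t x = (if t = 0 then x = x0 else B (phase T t) x)" for t x
  have S_step: "\<exists>u<M. S (Suc t) (L u x)" if "S t x" for t x
  proof (cases "t = 0")
    case True
    then show ?thesis using that start by (simp add: S_def phase_def)
  next
    case False
    then have "B (phase T t) x"
      using that by (simp add: S_def)
    then obtain u where u: "u < M" "B (Suc (phase T t)) (L u x)"
      using step phase_bounds[OF \<open>1 \<le> T\<close>, of t] by blast
    have "phase T (Suc t) = (if phase T t = T then 1 else Suc (phase T t))"
      using False phase_Suc[of t T] by simp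
    then have "B (phase T (Suc t)) (L u x)"
      using u(2) wrap by (cases "phase T t = T") simp_all
    then show ?thesis
      using u(1) by (auto simp: S_def)
  qed
  moreover have "S 0 x0"
    by (simp add: S_def)
  ultimately obtain u where u: "\<forall>t. u t < M" "\<forall>t. S t (traj L x0 u t)"
    using exists_traj_invariant[of S x0 M L] by blast
  have "B (phase T t) (traj L x0 u t)" if "1 \<le> t" for t
    using u(2) that by (simp add: S_def)
  then show ?thesis
    using u(1) by blast
qed

lemma trackable_imp_first_state_in_Xset:
  assumes L_log: "\<forall>u<M. \<forall>x<N. L u x < N" and "x0 < N"
    and "trackable M L H (yref T i) x0"
  shows "\<exists>u<M. L u x0 \<in> Xset N (Ltot M L) T (vvec N H (yref T i)) k 1"
proof -
  obtain u where u: "\<forall>t. u t < M" "\<forall>t\<ge>1. H (traj L x0 u t) = yref T i t"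
    using assms(3) unfolding trackable_def by blast
  define xs where "xs = traj L x0 u"
  have xs_range: "\<forall>t. xs t < N"
  proof
    show "xs t < N" for t
      unfolding xs_def by (induction t) (simp_all add: \<open>x0 < N\<close> L_log u(1))
  qed
  have "\<forall>t. Ltot M L (xs (Suc t)) (xs t)"
    using u(1) by (auto simp: xs_def Ltot_def Lblock_def)
  moreover have "\<forall>q. \<forall>s\<ge>1. vvec N H (yref T i) s (xs (q * T + s))"
    using u(2) xs_range by (simp add: vvec_def xs_def yref_periodic)
  ultimately have "betaS N (Ltot M L) T (vvec N H (yref T i)) (k - 1) 1 (xs 1)"
    using betaS_along_periodic_path[OF _ xs_range, where s = 1 and q = 0] by simp
  then show ?thesis
    using u(1) xs_range[rule_format, of 1] by (auto simp: Xset_def beta_def xs_def)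
qed

lemma trackable_if_Xset_cycle:
  fixes M N T :: nat and L :: "nat \<Rightarrow> nat \<Rightarrow> nat" and H i :: "nat \<Rightarrow> nat"
  defines "Lt \<equiv> Ltot M L" and "v \<equiv> vvec N H (yref T i)"
  assumes L_log: "\<forall>u<M. \<forall>x<N. L u x < N" and "1 \<le> T"
    and cycle: "Xset N Lt T v k (T + 1) \<subseteq> Xset N Lt T v k 1"
    and start: "\<exists>u<M. L u x0 \<in> Xset N Lt T v k 1"
  shows "trackable M L H (yref T i) x0"
proof -
  define B where "B s x = (x < N \<and> beta N Lt T v k s x)" for s x
  have "\<exists>u<M. B (Suc s) (L u x)" if "1 \<le> s" "s \<le> T" "B s x" for s x
    using that betaS_has_successor[of s T N Lt v "k - 1" x]
    by (auto simp: B_def beta_def Lt_def Ltot_def Lblock_def)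
  moreover have "B (Suc T) x \<Longrightarrow> B 1 x" for x
    using cycle by (auto simp: B_def Xset_def)
  moreover have "\<exists>u<M. B 1 (L u x0)"
    using start by (auto simp: B_def Xset_def)
  ultimately have "\<exists>u. (\<forall>t. u t < M) \<and> (\<forall>t\<ge>1. B (phase T t) (traj L x0 u t))"
    by (rule exists_traj_periodic[OF \<open>1 \<le> T\<close>])
  then obtain u where u: "\<forall>t. u t < M" "\<forall>t\<ge>1. B (phase T t) (traj L x0 u t)"
    by blast
  have B_tracks: "H x = yref T i s" if "1 \<le> s" "s \<le> T" "B s x" for s x
    using that betaS_imp_alpha[of s T N Lt v "k - 1" x] alpha_imp_v[of N Lt v s x]
    by (simp add: B_def beta_def v_def vvec_def)
  have "H (traj L x0 u t) = yref T i t" if "1 \<le> t" for t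
  proof -
    have "H (traj L x0 u t) = yref T i (phase T t)"
      using B_tracks u(2) that phase_bounds[OF \<open>1 \<le> T\<close>] by blast
    then show ?thesis
      using yref_phase[OF \<open>1 \<le> T\<close>] by simp
  qed
  then show ?thesis
    using u(1) by (auto simp: trackable_def)
qed

theorem theorem2:
  fixes n m p N M P T :: nat
    and L :: "nat \<Rightarrow> nat \<Rightarrow> nat" and H :: "nat \<Rightarrow> nat"
    and i :: "nat \<Rightarrow> nat" and x0 :: nat
  assumes "N = 2 ^ n" and "M = 2 ^ m" and "P = 2 ^ p"
    and L_log: "\<forall>u<M. \<forall>x<N. L u x < N"
    and H_log: "\<forall>x<N. H x < P"
    and "T \<ge> 1"
    and i_range: "\<forall>s\<in>{1..T}. i s < P"
    and minimal: "\<forall>T'. 1 \<le> T' \<and> T' < T \<longrightarrow> \<not> (\<forall>t\<ge>1. yref T i (t + T') = yref T i t)"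
    and "x0 < N"
  shows "trackable M L H (yref T i) x0 \<longleftrightarrow>
    (let Lt = Ltot M L; v = vvec N H (yref T i); k = kstar N Lt T v in
       (Xset N Lt T v k 1 \<noteq> {} \<and> Xset N Lt T v k (T + 1) \<subseteq> Xset N Lt T v k 1) \<and>
       (\<exists>u<M. L u x0 \<in> Xset N Lt T v k 1))"
proof -
  define Lt where "Lt = Ltot M L"
  define v where "v = vvec N H (yref T i)"
  define k where "k = kstar N Lt T v"
  have kstar: "Xset N Lt T v k (T + 1) \<subseteq> Xset N Lt T v k 1 \<or> Xset N Lt T v k 1 = {}"
    unfolding k_def by (rule kstar_spec)
  have "trackable M L H (yref T i) x0 \<Longrightarrow> \<exists>u<M. L u x0 \<in> Xset N Lt T v k 1"
    unfolding Lt_def v_def by (rule trackable_imp_first_state_in_Xset[OF L_log \<open>x0 < N\<close>])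
  moreover have "Xset N Lt T v k (T + 1) \<subseteq> Xset N Lt T v k 1 \<Longrightarrow>
      \<exists>u<M. L u x0 \<in> Xset N Lt T v k 1 \<Longrightarrow> trackable M L H (yref T i) x0"
    unfolding Lt_def v_def by (rule trackable_if_Xset_cycle[OF L_log \<open>T \<ge> 1\<close>])
  ultimately show ?thesis
    unfolding Let_def Lt_def[symmetric] v_def[symmetric] k_def[symmetric]
    using kstar by blast
qed

end
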